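(* Let $\rho$ be a monotone risk measure on $\mathcal M$. For $\alpha>0$ and $\boldsymbol\theta\in(0,\infty)^n$: (i) $\Lambda\otimes\mathbf P_{\alpha,\boldsymbol\theta}=\mathbf P_{\alpha,\Lambda\boldsymbol\theta}$ for all $\Lambda\in(0,\infty)^{n\times n}$; (ii) $\overline\rho(\mathbf P_{\alpha,\boldsymbol\theta})$ is decreasing in $\alpha$; (iii) $\overline\rho(\mathbf P_{\alpha,\boldsymbol\theta})$ is increasing in each component of $\boldsymbol\theta$.
   Context: Work on an atomless probability space. $\mathcal M$ is the set of cdfs on $\mathbb{R}$. A risk measure $\rho:\mathcal M\to\mathbb{R}$ is monotone if $\rho(F)\le\rho(G)$ whenever $F(x)\ge G(x)$ for all $x$. For $\mathbf F=(F_1,\dots,F_n)$, $\overline\rho(\mathbf F)=\sup\{\rho(H):H\text{ is the cdf of }X_1+\dots+X_n,\ X_i\sim F_i\}$. The Pareto cdf is $P_{\alpha,\theta}(x)=1-(\theta/x)^\alpha$ for $x\ge\theta$ (and $0$ for $x<\theta$), $\alpha,\theta>0$; $\mathbf P_{\alpha,\boldsymbol\theta}=(P_{\alpha,\theta_1},\dots,P_{\alpha,\theta_n})$. For a matrix $\Lambda=(\Lambda_{ij})$ with nonnegative entries, $\Lambda\otimes\mathbf F=(G_1,\dots,G_n)$ is the tuple of cdfs with $G_i^{-1}=\sum_j\Lambda_{ij}F_j^{-1}$, where $F^{-1}(p)=\inf\{x:F(x)\ge p\}$. "Increasing/decreasing" are in the non-strict sense. *)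

theory Defs
  imports "HOL-Probability.Probability"
begin

definition is_cdf :: "(real \<Rightarrow> real) \<Rightarrow> bool" where
  "is_cdf F \<longleftrightarrow> mono F \<and> (\<forall>x. continuous (at_right x) F)
     \<and> (F \<longlongrightarrow> 0) at_bot \<and> (F \<longlongrightarrow> 1) at_top"

definition quantile :: "(real \<Rightarrow> real) \<Rightarrow> real \<Rightarrow> real" where
  "quantile F p = Inf {x. F x \<ge> p}"

definition monotone_rm :: "((real \<Rightarrow> real) \<Rightarrow> real) \<Rightarrow> bool" where
  "monotone_rm \<rho> \<longleftrightarrow> (\<forall>F G. is_cdf F \<longrightarrow> is_cdf G \<longrightarrow> (\<forall>x. F x \<ge> G x) \<longrightarrow> \<rho> F \<le> \<rho> G)"

definition atomless :: "'a measure \<Rightarrow> bool" where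
  "atomless M \<longleftrightarrow> (\<forall>A\<in>sets M. measure M A > 0 \<longrightarrow>
      (\<exists>B\<in>sets M. B \<subseteq> A \<and> 0 < measure M B \<and> measure M B < measure M A))"

definition rv_cdf :: "'a measure \<Rightarrow> ('a \<Rightarrow> real) \<Rightarrow> real \<Rightarrow> real" where
  "rv_cdf M X x = measure M {\<omega>\<in>space M. X \<omega> \<le> x}"

text \<open>Worst-case value: sup of rho over cdfs of X_1+...+X_n with X_i ~ F_i
  (extended reals, since the supremum may be infinite).\<close>
definition rho_bar :: "'a measure \<Rightarrow> ((real \<Rightarrow> real) \<Rightarrow> real) \<Rightarrow> ('n::finite \<Rightarrow> real \<Rightarrow> real) \<Rightarrow> ereal" where
  "rho_bar M \<rho> F = (SUP X \<in> {X :: 'n \<Rightarrow> 'a \<Rightarrow> real.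
        (\<forall>i. X i \<in> borel_measurable M) \<and> (\<forall>i. rv_cdf M (X i) = F i)}.
      ereal (\<rho> (rv_cdf M (\<lambda>\<omega>. \<Sum>i\<in>UNIV. X i \<omega>))))"

definition pareto :: "real \<Rightarrow> real \<Rightarrow> real \<Rightarrow> real" where
  "pareto \<alpha> \<theta> x = (if x \<ge> \<theta> then 1 - (\<theta> / x) powr \<alpha> else 0)"

definition pareto_vec :: "real \<Rightarrow> ('n \<Rightarrow> real) \<Rightarrow> 'n \<Rightarrow> real \<Rightarrow> real" where
  "pareto_vec \<alpha> \<theta> = (\<lambda>i. pareto \<alpha> (\<theta> i))"

definition is_otimes :: "('n::finite \<Rightarrow> 'n \<Rightarrow> real) \<Rightarrow> ('n \<Rightarrow> real \<Rightarrow> real) \<Rightarrow> ('n \<Rightarrow> real \<Rightarrow> real) \<Rightarrow> bool" where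
  "is_otimes \<Lambda> F G \<longleftrightarrow> (\<forall>i. is_cdf (G i) \<and>
     (\<forall>p\<in>{0<..<1}. quantile (G i) p = (\<Sum>j\<in>UNIV. \<Lambda> i j * quantile (F j) p)))"

definition mat_vec :: "('n::finite \<Rightarrow> 'n \<Rightarrow> real) \<Rightarrow> ('n \<Rightarrow> real) \<Rightarrow> 'n \<Rightarrow> real" where
  "mat_vec \<Lambda> \<theta> = (\<lambda>i. \<Sum>j\<in>UNIV. \<Lambda> i j * \<theta> j)"

end

theory Submission
  imports Defs
begin

text \<open>
  The quantile function of \<open>pareto \<alpha> \<theta>\<close> is \<open>p \<mapsto> \<theta> * (1 - p) powr (-1/\<alpha>)\<close>, which is
  linear in \<open>\<theta>\<close>; this gives (i). For (ii) and (iii): if \<open>X\<close> has cdf \<open>pareto a \<theta>\<close>, then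
  \<open>c * (max X \<theta> / \<theta>) powr r\<close> has cdf \<open>pareto (a / r) c\<close>, and for \<open>c \<ge> \<theta>\<close>, \<open>r \<ge> 1\<close> it
  dominates \<open>X\<close> pointwise. Applying these maps (with \<open>r = \<alpha>2 / \<alpha>1\<close>) componentwise to a
  coupling of the marginals \<open>pareto \<alpha>2 (\<theta> i)\<close> gives a coupling of the marginals
  \<open>pareto \<alpha>1 (\<theta>' i)\<close> with a pointwise larger sum, hence a smaller cdf and, \<open>\<rho>\<close> being
  monotone, a larger risk.
\<close>

lemma rv_cdf_eq_cdf_distr:
  assumes "X \<in> borel_measurable M"
  shows "rv_cdf M X = cdf (distr M borel X)"
proof
  fix x
  have "cdf (distr M borel X) x = measure M (X -` {..x} \<inter> space M)"
    unfolding cdf_def by (subst measure_distr) (use assms in auto)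
  also have "X -` {..x} \<inter> space M = {\<omega>\<in>space M. X \<omega> \<le> x}" by auto
  finally show "rv_cdf M X x = cdf (distr M borel X) x" unfolding rv_cdf_def by simp
qed

lemma is_cdf_rv_cdf:
  assumes "prob_space M" "X \<in> borel_measurable M"
  shows "is_cdf (rv_cdf M X)"
proof -
  interpret real_distribution "distr M borel X"
    using prob_space.real_distribution_distr[OF assms(1)] assms(2) by simp
  show ?thesis unfolding is_cdf_def rv_cdf_eq_cdf_distr[OF assms(2)]
    using cdf_nondecreasing cdf_is_right_cont cdf_lim_at_bot cdf_lim_at_top_prob
    by (auto simp: mono_def)
qed

lemma rv_cdf_antimono:
  assumes "prob_space M" "X \<in> borel_measurable M" "\<And>\<omega>. X \<omega> \<le> Y \<omega>"
  shows "rv_cdf M Y x \<le> rv_cdf M X x"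
proof -
  interpret prob_space M by (rule assms(1))
  have "{\<omega>\<in>space M. X \<omega> \<le> x} \<in> sets M" using assms(2) by measurable
  moreover have "{\<omega>\<in>space M. Y \<omega> \<le> x} \<subseteq> {\<omega>\<in>space M. X \<omega> \<le> x}"
    using assms(3) order_trans by blast
  ultimately show ?thesis unfolding rv_cdf_def by (rule finite_measure_mono[rotated])
qed

lemma rho_bar_mono_transform:
  fixes F G :: "'n::finite \<Rightarrow> real \<Rightarrow> real" and \<phi> :: "'n \<Rightarrow> real \<Rightarrow> real"
  assumes "prob_space M" "monotone_rm \<rho>"
    and dominates: "\<And>i x. x \<le> \<phi> i x" and measurable: "\<And>i. \<phi> i \<in> borel_measurable borel"
    and transforms: "\<And>i X. X \<in> borel_measurable M \<Longrightarrow> rv_cdf M X = F i \<Longrightarrow>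
                             rv_cdf M (\<lambda>\<omega>. \<phi> i (X \<omega>)) = G i"
  shows "rho_bar M \<rho> F \<le> rho_bar M \<rho> G"
  unfolding rho_bar_def
proof (rule SUP_mono)
  fix X :: "'n \<Rightarrow> 'a \<Rightarrow> real"
  assume "X \<in> {X. (\<forall>i. X i \<in> borel_measurable M) \<and> (\<forall>i. rv_cdf M (X i) = F i)}"
  hence X_meas: "\<And>i. X i \<in> borel_measurable M" and X_cdf: "\<And>i. rv_cdf M (X i) = F i" by auto
  define Y where "Y = (\<lambda>i \<omega>. \<phi> i (X i \<omega>))"
  have Y_meas: "\<And>i. Y i \<in> borel_measurable M"
    unfolding Y_def using measurable_compose[OF X_meas measurable] by (simp add: o_def)
  have Y_cdf: "\<And>i. rv_cdf M (Y i) = G i" unfolding Y_def using transforms X_meas X_cdf by blast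
  have sum_X: "(\<lambda>\<omega>. \<Sum>i\<in>UNIV. X i \<omega>) \<in> borel_measurable M" using X_meas by measurable
  have sum_Y: "(\<lambda>\<omega>. \<Sum>i\<in>UNIV. Y i \<omega>) \<in> borel_measurable M" using Y_meas by measurable
  have "rv_cdf M (\<lambda>\<omega>. \<Sum>i\<in>UNIV. Y i \<omega>) x \<le> rv_cdf M (\<lambda>\<omega>. \<Sum>i\<in>UNIV. X i \<omega>) x" for x
    using assms(1) sum_X by (rule rv_cdf_antimono) (auto simp: Y_def intro: sum_mono dominates)
  hence "\<rho> (rv_cdf M (\<lambda>\<omega>. \<Sum>i\<in>UNIV. X i \<omega>)) \<le> \<rho> (rv_cdf M (\<lambda>\<omega>. \<Sum>i\<in>UNIV. Y i \<omega>))"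
    using assms(2) is_cdf_rv_cdf[OF assms(1) sum_X] is_cdf_rv_cdf[OF assms(1) sum_Y]
    unfolding monotone_rm_def by blast
  with Y_meas Y_cdf show "\<exists>Y\<in>{X. (\<forall>i. X i \<in> borel_measurable M) \<and> (\<forall>i. rv_cdf M (X i) = G i)}.
     ereal (\<rho> (rv_cdf M (\<lambda>\<omega>. \<Sum>i\<in>UNIV. X i \<omega>))) \<le> ereal (\<rho> (rv_cdf M (\<lambda>\<omega>. \<Sum>i\<in>UNIV. Y i \<omega>)))"
    by auto
qed

lemma powr_le_iff_le_powr_inverse:
  fixes u v b :: real
  assumes "u > 0" "v > 0" "b > 0"
  shows "u powr b \<le> v \<longleftrightarrow> u \<le> v powr (1/b)"
proof
  assume "u powr b \<le> v"
  hence "(u powr b) powr (1/b) \<le> v powr (1/b)" using assms by (intro powr_mono2) auto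
  thus "u \<le> v powr (1/b)" using assms by (simp add: powr_powr)
next
  assume "u \<le> v powr (1/b)"
  hence "u powr b \<le> (v powr (1/b)) powr b" using assms by (intro powr_mono2) auto
  thus "u powr b \<le> v" using assms by (simp add: powr_powr)
qed

lemma pareto_eq_max:
  assumes "\<theta> > 0"
  shows "pareto a \<theta> = (\<lambda>x. 1 - (\<theta> / max x \<theta>) powr a)"
  using assms by (auto simp: pareto_def fun_eq_iff max_def)

lemma is_cdf_pareto:
  assumes "\<theta> > 0" "a > 0"
  shows "is_cdf (pareto a \<theta>)"
proof -
  have cont: "continuous_on UNIV (pareto a \<theta>)"
    unfolding pareto_eq_max[OF assms(1)] using assms
    by (intro continuous_intros) (auto simp: max_def)
  have "mono (pareto a \<theta>)"
    unfolding pareto_eq_max[OF assms(1)]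
  proof (rule monoI)
    fix x y :: real assume "x \<le> y"
    hence "\<theta> / max y \<theta> \<le> \<theta> / max x \<theta>" using assms
      by (intro divide_left_mono) (auto simp: max_def)
    hence "(\<theta> / max y \<theta>) powr a \<le> (\<theta> / max x \<theta>) powr a" using assms
      by (intro powr_mono2) auto
    thus "1 - (\<theta> / max x \<theta>) powr a \<le> 1 - (\<theta> / max y \<theta>) powr a" by simp
  qed
  moreover have "(pareto a \<theta> \<longlongrightarrow> 0) at_bot"
  proof (rule Lim_transform_eventually[OF tendsto_const])
    show "\<forall>\<^sub>F x in at_bot. 0 = pareto a \<theta> x"
      unfolding eventually_at_bot_linorder by (rule exI[of _ "\<theta> - 1"]) (auto simp: pareto_def)
  qed
  moreover have "(pareto a \<theta> \<longlongrightarrow> 1) at_top"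
  proof (rule Lim_transform_eventually)
    have "((\<lambda>x. \<theta> / x) \<longlongrightarrow> 0) at_top"
      by (intro tendsto_divide_0[OF tendsto_const] filterlim_at_top_imp_at_infinity filterlim_ident)
    hence "((\<lambda>x. (\<theta> / x) powr a) \<longlongrightarrow> 0) at_top"
      using assms by (intro tendsto_zero_powrI[where b=a] tendsto_const)
        (auto simp: eventually_at_top_linorder intro!: exI[of _ 1])
    thus "((\<lambda>x. 1 - (\<theta> / x) powr a) \<longlongrightarrow> 1) at_top"
      using tendsto_diff[OF tendsto_const] by fastforce
    show "\<forall>\<^sub>F x in at_top. 1 - (\<theta> / x) powr a = pareto a \<theta> x"
      unfolding eventually_at_top_linorder by (rule exI[of _ \<theta>]) (auto simp: pareto_def)
  qed
  ultimately show ?thesis unfolding is_cdf_def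
    using cont by (auto intro: continuous_within_subset[of _ UNIV] simp: continuous_on_eq_continuous_within)
qed

lemma quantile_pareto:
  assumes "\<theta> > 0" "a > 0" "0 < p" "p < 1"
  shows "quantile (pareto a \<theta>) p = \<theta> * (1 - p) powr (-1/a)"
proof -
  have root_pos: "(1 - p) powr (1/a) > 0" using assms by simp
  have root_le1: "(1 - p) powr (1/a) \<le> 1" using assms by (intro powr_le1) auto
  have q_eq: "\<theta> * (1 - p) powr (-1/a) = \<theta> / (1 - p) powr (1/a)"
    using assms by (simp add: powr_minus_divide divide_inverse powr_minus)
  have "pareto a \<theta> x \<ge> p \<longleftrightarrow> \<theta> / (1 - p) powr (1/a) \<le> x" for x
  proof (cases "\<theta> \<le> x")
    case True
    hence "pareto a \<theta> x \<ge> p \<longleftrightarrow> (\<theta> / x) powr a \<le> 1 - p" by (auto simp: pareto_def)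
    also have "\<dots> \<longleftrightarrow> \<theta> / x \<le> (1 - p) powr (1/a)"
      using True assms by (intro powr_le_iff_le_powr_inverse) auto
    also have "\<dots> \<longleftrightarrow> \<theta> / (1 - p) powr (1/a) \<le> x"
      using True assms root_pos by (simp add: divide_le_eq mult.commute)
    finally show ?thesis .
  next
    case False
    moreover have "\<theta> \<le> \<theta> / (1 - p) powr (1/a)"
      using assms root_pos root_le1 by (simp add: le_divide_eq)
    ultimately show ?thesis using assms by (simp add: pareto_def)
  qed
  hence "{x. pareto a \<theta> x \<ge> p} = {\<theta> / (1 - p) powr (1/a)..}" by (simp add: atLeast_def)
  thus ?thesis unfolding quantile_def q_eq by simp
qed

lemma is_otimes_pareto_vec:
  fixes \<theta> :: "'n::finite \<Rightarrow> real"
  assumes "\<forall>i. \<theta> i > 0" "a > 0" "\<forall>i j. \<Lambda> i j > 0"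
  shows "is_otimes \<Lambda> (pareto_vec a \<theta>) (pareto_vec a (mat_vec \<Lambda> \<theta>))"
proof -
  have pos: "mat_vec \<Lambda> \<theta> i > 0" for i
    unfolding mat_vec_def using assms by (intro sum_pos) auto
  show ?thesis unfolding is_otimes_def pareto_vec_def
  proof (intro allI conjI ballI)
    fix i show "is_cdf (pareto a (mat_vec \<Lambda> \<theta> i))" using pos assms is_cdf_pareto by blast
  next
    fix i and p :: real assume p: "p \<in> {0<..<1}"
    have "quantile (pareto a (mat_vec \<Lambda> \<theta> i)) p = mat_vec \<Lambda> \<theta> i * (1 - p) powr (-1/a)"
      using pos p assms by (intro quantile_pareto) auto
    also have "\<dots> = (\<Sum>j\<in>UNIV. \<Lambda> i j * (\<theta> j * (1 - p) powr (-1/a)))"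
      unfolding mat_vec_def by (simp add: sum_distrib_right mult.assoc)
    also have "\<dots> = (\<Sum>j\<in>UNIV. \<Lambda> i j * quantile (pareto a (\<theta> j)) p)"
      using p assms by (intro sum.cong refl) (simp add: quantile_pareto)
    finally show "quantile (pareto a (mat_vec \<Lambda> \<theta> i)) p =
                  (\<Sum>j\<in>UNIV. \<Lambda> i j * quantile (pareto a (\<theta> j)) p)" .
  qed
qed

lemma pareto_rescale_le_iff:
  fixes x y \<theta> c r :: real
  assumes "\<theta> > 0" "c > 0" "r > 0" "c \<le> y"
  shows "c * (max x \<theta> / \<theta>) powr r \<le> y \<longleftrightarrow> x \<le> \<theta> * (y / c) powr (1/r)"
proof -
  have "1 \<le> (y / c) powr (1/r)" using assms by (intro ge_one_powr_ge_zero) auto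
  hence above: "\<theta> \<le> \<theta> * (y / c) powr (1/r)" using assms by simp
  have "c * (max x \<theta> / \<theta>) powr r \<le> y \<longleftrightarrow> (max x \<theta> / \<theta>) powr r \<le> y / c"
    using assms by (simp add: le_divide_eq mult.commute)
  also have "\<dots> \<longleftrightarrow> max x \<theta> / \<theta> \<le> (y / c) powr (1/r)"
    using assms by (intro powr_le_iff_le_powr_inverse) auto
  also have "\<dots> \<longleftrightarrow> max x \<theta> \<le> \<theta> * (y / c) powr (1/r)"
    using assms by (simp add: divide_le_eq mult.commute)
  also have "\<dots> \<longleftrightarrow> x \<le> \<theta> * (y / c) powr (1/r)" using above by simp
  finally show ?thesis .
qed

lemma rv_cdf_pareto_rescale:
  assumes "\<theta> > 0" "c > 0" "r > 0" and X: "rv_cdf M X = pareto a \<theta>"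
  shows "rv_cdf M (\<lambda>\<omega>. c * (max (X \<omega>) \<theta> / \<theta>) powr r) = pareto (a / r) c"
proof
  fix y
  show "rv_cdf M (\<lambda>\<omega>. c * (max (X \<omega>) \<theta> / \<theta>) powr r) y = pareto (a / r) c y"
  proof (cases "c \<le> y")
    case True
    define z where "z = \<theta> * (y / c) powr (1/r)"
    have "{\<omega>\<in>space M. c * (max (X \<omega>) \<theta> / \<theta>) powr r \<le> y} = {\<omega>\<in>space M. X \<omega> \<le> z}"
      using pareto_rescale_le_iff[OF assms(1-3) True] unfolding z_def by blast
    hence "rv_cdf M (\<lambda>\<omega>. c * (max (X \<omega>) \<theta> / \<theta>) powr r) y = pareto a \<theta> z"
      unfolding rv_cdf_def X[symmetric] by simp
    moreover have "\<theta> \<le> z"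
      using assms True unfolding z_def by (simp add: ge_one_powr_ge_zero)
    moreover have "(\<theta> / z) powr a = (c / y) powr (a / r)"
    proof -
      have "\<theta> / z = (c / y) powr (1/r)"
        using assms True unfolding z_def by (simp add: powr_divide)
      thus ?thesis using assms True by (simp add: powr_powr)
    qed
    ultimately show ?thesis using True by (simp add: pareto_def)
  next
    case False
    have "c \<le> c * (max x \<theta> / \<theta>) powr r" for x
      using assms by (simp add: ge_one_powr_ge_zero le_divide_eq)
    hence "\<not> c * (max x \<theta> / \<theta>) powr r \<le> y" for x
      using False by (meson order_trans)
    hence empty: "{\<omega>\<in>space M. c * (max (X \<omega>) \<theta> / \<theta>) powr r \<le> y} = {}" by simp
    show ?thesis using False unfolding rv_cdf_def empty by (simp add: pareto_def)
  qed
qed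

lemma le_pareto_rescale:
  fixes x \<theta> c r :: real
  assumes "\<theta> > 0" "\<theta> \<le> c" "1 \<le> r"
  shows "x \<le> c * (max x \<theta> / \<theta>) powr r"
proof -
  have base: "1 \<le> max x \<theta> / \<theta>" using assms by (simp add: le_divide_eq)
  have "max x \<theta> = \<theta> * (max x \<theta> / \<theta>) powr 1" using assms by simp
  also have "\<dots> \<le> c * (max x \<theta> / \<theta>) powr r"
    using assms base by (intro mult_mono powr_mono) auto
  finally show ?thesis by simp
qed

lemma rho_bar_pareto_vec_mono:
  fixes \<theta> \<theta>' :: "'n::finite \<Rightarrow> real"
  assumes "prob_space M" "monotone_rm \<rho>"
    and \<theta>: "\<And>i. 0 < \<theta> i" "\<And>i. \<theta> i \<le> \<theta>' i" and a: "0 < a1" "a1 \<le> a2"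
  shows "rho_bar M \<rho> (pareto_vec a2 \<theta>) \<le> rho_bar M \<rho> (pareto_vec a1 \<theta>')"
proof (rule rho_bar_mono_transform[OF assms(1,2),
      where \<phi> = "\<lambda>i x. \<theta>' i * (max x (\<theta> i) / \<theta> i) powr (a2 / a1)"])
  fix i x show "x \<le> \<theta>' i * (max x (\<theta> i) / \<theta> i) powr (a2 / a1)"
    using \<theta> a by (intro le_pareto_rescale) auto
next
  fix i X assume "rv_cdf M X = pareto_vec a2 \<theta> i"
  moreover have "a2 / (a2 / a1) = a1" using a by simp
  moreover have "0 < \<theta>' i" using \<theta> order.strict_trans2 by blast
  ultimately show "rv_cdf M (\<lambda>\<omega>. \<theta>' i * (max (X \<omega>) (\<theta> i) / \<theta> i) powr (a2 / a1))
                   = pareto_vec a1 \<theta>' i"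
    using rv_cdf_pareto_rescale[of "\<theta> i" "\<theta>' i" "a2 / a1" M X a2] \<theta> a
    unfolding pareto_vec_def by simp
qed measurable

theorem proposition14:
  fixes M :: "'a measure" and \<rho> :: "(real \<Rightarrow> real) \<Rightarrow> real"
    and \<theta> :: "'n::finite \<Rightarrow> real"
  assumes "prob_space M" and "atomless M"
    and "monotone_rm \<rho>"
    and "\<forall>i. \<theta> i > 0"
  shows "(\<forall>\<alpha> > 0. \<forall>\<Lambda> :: 'n \<Rightarrow> 'n \<Rightarrow> real. (\<forall>i j. \<Lambda> i j > 0) \<longrightarrow>
            is_otimes \<Lambda> (pareto_vec \<alpha> \<theta>) (pareto_vec \<alpha> (mat_vec \<Lambda> \<theta>)))
       \<and> (\<forall>\<alpha>1 \<alpha>2. 0 < \<alpha>1 \<longrightarrow> \<alpha>1 \<le> \<alpha>2 \<longrightarrow>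
            rho_bar M \<rho> (pareto_vec \<alpha>2 \<theta>) \<le> rho_bar M \<rho> (pareto_vec \<alpha>1 \<theta>))
       \<and> (\<forall>\<alpha> > 0. \<forall>i t. \<theta> i \<le> t \<longrightarrow>
            rho_bar M \<rho> (pareto_vec \<alpha> \<theta>) \<le> rho_bar M \<rho> (pareto_vec \<alpha> (\<theta>(i := t))))"
proof (intro conjI allI impI)
  fix \<alpha> :: real and \<Lambda> :: "'n \<Rightarrow> 'n \<Rightarrow> real"
  assume "\<alpha> > 0" "\<forall>i j. \<Lambda> i j > 0"
  with assms(4) show "is_otimes \<Lambda> (pareto_vec \<alpha> \<theta>) (pareto_vec \<alpha> (mat_vec \<Lambda> \<theta>))"
    by (rule is_otimes_pareto_vec)
next
  fix \<alpha>1 \<alpha>2 :: real assume "0 < \<alpha>1" "\<alpha>1 \<le> \<alpha>2"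
  with assms(4) show "rho_bar M \<rho> (pareto_vec \<alpha>2 \<theta>) \<le> rho_bar M \<rho> (pareto_vec \<alpha>1 \<theta>)"
    by (intro rho_bar_pareto_vec_mono[OF assms(1,3)]) auto
next
  fix \<alpha> t :: real and i assume "\<alpha> > 0" "\<theta> i \<le> t"
  with assms(4) show "rho_bar M \<rho> (pareto_vec \<alpha> \<theta>) \<le> rho_bar M \<rho> (pareto_vec \<alpha> (\<theta>(i := t)))"
    by (intro rho_bar_pareto_vec_mono[OF assms(1,3)]) auto
qed

end
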